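(* Let $N\ge1$ and $H\ge1$ be constants. Let $z_1,\dots,z_n$ be numbers with $0\le z_k\le H$, and define $Z_0,Z_1,\dots,Z_n$ by $1\le Z_0\le 2H-1$ and $Z_k=Z_{k-1}+z_k$ for $k\ge1$. Then for all $n\ge1$, \[ \sum_{k=1}^n\frac{z_k}{\sqrt{kN+Z_{k-1}}}\le\sum_{k=1}^n\sqrt{\frac{(k+1)H-1}{kN+(k+1)H-1}}\,\frac{z_k}{\sqrt{Z_{k-1}}}\le\sqrt{\frac{2H-1}{N+2H-1}}\sum_{k=1}^n\frac{z_k}{\sqrt{Z_{k-1}}}. \] *)

theory Defs
  imports Complex_Main
begin

end

theory Submission
  imports Defs
begin

text \<open>Everything rests on the monotonicity of \<open>x \<mapsto> x / (c + x)\<close> for \<open>c \<ge> 0\<close>.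
  Writing \<open>z\<^sub>k / \<surd>(kN + Z\<^sub>k\<^sub>-\<^sub>1)\<close> as
  \<open>\<surd>(Z\<^sub>k\<^sub>-\<^sub>1 / (kN + Z\<^sub>k\<^sub>-\<^sub>1)) \<cdot> z\<^sub>k / \<surd>Z\<^sub>k\<^sub>-\<^sub>1\<close>,
  the bound \<open>Z\<^sub>k\<^sub>-\<^sub>1 \<le> Z\<^sub>0 + (k - 1) H \<le> (k + 1) H - 1\<close> gives the first
  inequality.  Dividing numerator and denominator by \<open>k\<close>, the \<open>k\<close>-th weight is
  \<open>a / (N + a)\<close> with \<open>a = H + (H - 1) / k \<le> 2H - 1\<close>, which gives the second.\<close>

lemma divide_add_self_mono:
  fixes x a c :: real
  assumes "0 < x" "x \<le> a" "0 \<le> c"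
  shows "x / (c + x) \<le> a / (c + a)"
proof -
  have "c * x \<le> c * a" using assms by (intro mult_left_mono)
  then have "x * (c + a) \<le> a * (c + x)" by (simp add: algebra_simps)
  then show ?thesis using assms by (simp add: divide_simps)
qed

lemma divide_sqrt_add_le:
  fixes x a c z :: real
  assumes "0 < x" "x \<le> a" "0 \<le> c" "0 \<le> z"
  shows "z / sqrt (c + x) \<le> sqrt (a / (c + a)) * (z / sqrt x)"
proof -
  have "z / sqrt (c + x) = sqrt (x / (c + x)) * (z / sqrt x)"
    using assms by (simp add: real_sqrt_divide field_simps)
  also have "\<dots> \<le> sqrt (a / (c + a)) * (z / sqrt x)"
    using assms divide_add_self_mono[OF assms(1-3)] by (intro mult_right_mono) auto
  finally show ?thesis .
qed

lemma partial_sums_bounds: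
  fixes z Z :: "nat \<Rightarrow> real" and H :: real
  assumes "\<And>k. 1 \<le> k \<Longrightarrow> k \<le> n \<Longrightarrow> 0 \<le> z k \<and> z k \<le> H"
    and "\<And>k. 1 \<le> k \<Longrightarrow> k \<le> n \<Longrightarrow> Z k = Z (k - 1) + z k"
    and "m \<le> n"
  shows "Z 0 \<le> Z m \<and> Z m \<le> Z 0 + real m * H"
  using assms(3)
proof (induction m)
  case 0
  then show ?case by simp
next
  case (Suc m)
  then have "Z (Suc m) = Z m + z (Suc m)" and "0 \<le> z (Suc m) \<and> z (Suc m) \<le> H"
    using assms(1,2)[of "Suc m"] by auto
  with Suc show ?case by (simp add: algebra_simps)
qed

lemma ratio_le_first_ratio:
  fixes N H :: real and k :: nat
  assumes "N \<ge> 1" "H \<ge> 1" "k \<ge> 1"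
  shows "((real k + 1) * H - 1) / (real k * N + (real k + 1) * H - 1)
         \<le> (2 * H - 1) / (N + 2 * H - 1)"
proof -
  define a where "a = ((real k + 1) * H - 1) / real k"
  have k: "real k \<ge> 1" using assms(3) by simp
  have "(real k - 1) * (H - 1) \<ge> 0" using k assms(2) by simp
  then have "(real k + 1) * H - 1 \<le> (2 * H - 1) * real k" by (simp add: algebra_simps)
  then have a_le: "a \<le> 2 * H - 1" using k by (simp add: a_def divide_simps)
  have "(real k + 1) * H \<ge> 2 * 1" using k assms(2) by (intro mult_mono) auto
  then have a_pos: "0 < a" using k by (simp add: a_def)
  have "real k * N + (real k + 1) * H - 1 = real k * (N + a)" using k by (simp add: a_def field_simps)
  then have "((real k + 1) * H - 1) / (real k * N + (real k + 1) * H - 1) = a / (N + a)"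
    using k by (simp add: a_def)
  also have "\<dots> \<le> (2 * H - 1) / (N + (2 * H - 1))"
    using divide_add_self_mono[OF a_pos a_le] assms(1) by simp
  finally show ?thesis by (simp add: add_diff_eq)
qed

theorem corollary6:
  fixes N H :: real and z Z :: "nat \<Rightarrow> real" and n :: nat
  assumes "N \<ge> 1" and "H \<ge> 1"
    and "\<And>k. 1 \<le> k \<Longrightarrow> k \<le> n \<Longrightarrow> 0 \<le> z k \<and> z k \<le> H"
    and "1 \<le> Z 0" and "Z 0 \<le> 2 * H - 1"
    and "\<And>k. 1 \<le> k \<Longrightarrow> k \<le> n \<Longrightarrow> Z k = Z (k - 1) + z k"
    and "n \<ge> 1"
  shows "(\<Sum>k=1..n. z k / sqrt (real k * N + Z (k - 1)))
           \<le> (\<Sum>k=1..n. sqrt (((real k + 1) * H - 1) / (real k * N + (real k + 1) * H - 1))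
                           * (z k / sqrt (Z (k - 1))))
       \<and> (\<Sum>k=1..n. sqrt (((real k + 1) * H - 1) / (real k * N + (real k + 1) * H - 1))
                           * (z k / sqrt (Z (k - 1))))
           \<le> sqrt ((2 * H - 1) / (N + 2 * H - 1)) * (\<Sum>k=1..n. z k / sqrt (Z (k - 1)))"
proof -
  have Z_bounds: "1 \<le> Z (k - 1) \<and> Z (k - 1) \<le> (real k + 1) * H - 1"
    and z_nonneg: "0 \<le> z k" if k: "k \<in> {1..n}" for k
  proof -
    have "Z 0 \<le> Z (k - 1) \<and> Z (k - 1) \<le> Z 0 + real (k - 1) * H"
      using k by (intro partial_sums_bounds[where n = n and z = z and Z = Z, OF assms(3,6)]) auto
    then show "1 \<le> Z (k - 1) \<and> Z (k - 1) \<le> (real k + 1) * H - 1"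
      using k assms(4,5) by (auto simp: of_nat_diff algebra_simps)
    show "0 \<le> z k" using k assms(3) by auto
  qed
  have le_weighted: "z k / sqrt (real k * N + Z (k - 1))
      \<le> sqrt (((real k + 1) * H - 1) / (real k * N + (real k + 1) * H - 1)) * (z k / sqrt (Z (k - 1)))"
    if "k \<in> {1..n}" for k
    using divide_sqrt_add_le[of "Z (k - 1)" "(real k + 1) * H - 1" "real k * N" "z k"]
      Z_bounds[OF that] z_nonneg[OF that] assms(1) by (simp add: add_diff_eq)
  have weighted_le: "sqrt (((real k + 1) * H - 1) / (real k * N + (real k + 1) * H - 1)) * (z k / sqrt (Z (k - 1)))
      \<le> sqrt ((2 * H - 1) / (N + 2 * H - 1)) * (z k / sqrt (Z (k - 1)))"
    if "k \<in> {1..n}" for k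
    using ratio_le_first_ratio[OF assms(1,2), of k] Z_bounds[OF that] z_nonneg[OF that] that
    by (intro mult_right_mono) auto
  show ?thesis
    unfolding sum_distrib_left using sum_mono[OF le_weighted] sum_mono[OF weighted_le] by (rule conjI)
qed

end
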